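(* Let $\Omega_0\subset\mathbb{C}$ be a simply connected domain and let $K_1=F_1+\overline{G_1}$ and $K_2=F_2+\overline{G_2}$ be two sense-preserving harmonic mappings in $\Omega_0$ (with $F_j,G_j$ analytic in $\Omega_0$), with dilatations $p_1=G_1'/F_1'$ and $p_2=G_2'/F_2'$ and Jacobians $\mathcal{J}_1=|F_1'|^2-|G_1'|^2$, $\mathcal{J}_2=|F_2'|^2-|G_2'|^2$. Then: (i) $S_H(K_1)$ is analytic in $\Omega_0$ if and only if $p_1$ is constant; (ii) if $G_1'=\lambda F_1'$ for some $\lambda\in\mathbb{C}$ and $\mathcal{J}_1=\mathcal{J}_2$, then there are constants $\alpha,\beta\in\mathbb{C}$ such that $F_2'=\alpha F_1'$ and $G_2'=\beta F_1'$, where $|\alpha|^2-|\beta|^2=1-|\lambda|^2>0$; (iii) if $G_1'=\lambda F_1'$ for some $\lambda\in\mathbb{C}$ and $S_H(K_1)=S_H(K_2)$, then $F_2'=(\mathcal{T}\circ F_1)'$ and $G_2'=c(\mathcal{T}\circ F_1)'$ for some constant $c\in\mathbb{C}$ with $|c|<1$ and some non-constant Möbius transformation $\mathcal{T}(z)=\frac{mz+n}{sz+d}$, $md-ns\neq 0$.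
   Context: A complex-valued harmonic mapping on a simply connected domain $\Omega_0$ has the form $K=F+\overline{G}$ with $F,G$ analytic. It is locally univalent iff its Jacobian $\mathcal{J}=|F'|^2-|G'|^2$ does not vanish, and sense-preserving if $\mathcal{J}>0$; its dilatation is $p=G'/F'$ (analytic, $|p|<1$ when sense-preserving). The pre-Schwarzian derivative of a locally univalent harmonic $K$ is $P_H(K)=\partial_z\log\mathcal{J}$, which for sense-preserving $K$ equals $\frac{F''}{F'}-\frac{p'\overline{p}}{1-|p|^2}$, and the Schwarzian derivative is $S_H(K)=\partial_z\big(P_H(K)\big)-\frac12\big(P_H(K)\big)^2$. For analytic locally univalent $F$, the classical Schwarzian is $S(F)=(F''/F')'-\frac12(F''/F')^2$. *)

theory Defs
  imports "HOL-Complex_Analysis.Complex_Analysis"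
begin

text \<open>Wirtinger derivative d/dz of a (real-)differentiable function of a complex variable:
  \<partial>_z f = (f_x - i f_y)/2, expressed via the Frechet derivative.\<close>
definition wirtinger_z :: "(complex \<Rightarrow> complex) \<Rightarrow> complex \<Rightarrow> complex" where
  "wirtinger_z f z =
     (frechet_derivative f (at z) 1 - \<i> * frechet_derivative f (at z) \<i>) / 2"

definition harm :: "(complex \<Rightarrow> complex) \<Rightarrow> (complex \<Rightarrow> complex) \<Rightarrow> complex \<Rightarrow> complex" where
  "harm F G z = F z + cnj (G z)"

definition jacobian_H :: "(complex \<Rightarrow> complex) \<Rightarrow> (complex \<Rightarrow> complex) \<Rightarrow> complex \<Rightarrow> real" where
  "jacobian_H F G z = (norm (deriv F z))^2 - (norm (deriv G z))^2"

definition dilatation :: "(complex \<Rightarrow> complex) \<Rightarrow> (complex \<Rightarrow> complex) \<Rightarrow> complex \<Rightarrow> complex" where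
  "dilatation F G z = deriv G z / deriv F z"

definition sense_preserving_harmonic ::
  "complex set \<Rightarrow> (complex \<Rightarrow> complex) \<Rightarrow> (complex \<Rightarrow> complex) \<Rightarrow> bool" where
  "sense_preserving_harmonic \<Omega> F G \<longleftrightarrow>
     F holomorphic_on \<Omega> \<and> G holomorphic_on \<Omega> \<and> (\<forall>z\<in>\<Omega>. jacobian_H F G z > 0)"

definition pre_schwarzian_H :: "(complex \<Rightarrow> complex) \<Rightarrow> (complex \<Rightarrow> complex) \<Rightarrow> complex \<Rightarrow> complex" where
  "pre_schwarzian_H F G z = wirtinger_z (\<lambda>w. complex_of_real (ln (jacobian_H F G w))) z"

definition schwarzian_H :: "(complex \<Rightarrow> complex) \<Rightarrow> (complex \<Rightarrow> complex) \<Rightarrow> complex \<Rightarrow> complex" where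
  "schwarzian_H F G z = wirtinger_z (pre_schwarzian_H F G) z - (pre_schwarzian_H F G z)^2 / 2"

definition moebius :: "complex \<Rightarrow> complex \<Rightarrow> complex \<Rightarrow> complex \<Rightarrow> complex \<Rightarrow> complex" where
  "moebius m n s d w = (m * w + n) / (s * w + d)"

end

(*
  With p = G'/F' and u = conj p / (1 - |p|^2) one has J = |F'|^2 (1 - |p|^2), and Wirtinger
  calculus gives P_H(K) = F''/F' - p' u and S_H(K) = S(F) + u (p' F''/F' - p'') - 3/2 (p' u)^2.
  Near a point where p' is nonzero u is not holomorphic, its d/d(conj z)-derivative being
  conj p' / (1 - |p|^2)^2. So if S_H(K) is holomorphic, solving the identity for u on {p' <> 0}
  yields a holomorphic expression, and hence p' = 0 everywhere: this is (i). The same argument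
  applied to P_H(K_2), which equals P_H(K_1) = F_1''/F_1' when the Jacobians agree, makes p_2
  constant and F_2''/F_2' = F_1''/F_1', which gives (ii). In (iii), S_H(K_2) = S(F_1) is
  holomorphic, so p_2 is constant and S(F_2) = S(F_1); with g^2 = F_1'/F_2' one computes
  S(F_2) = S(F_1) - 2 (F_1' g'' - F_1'' g') / (F_1' g), so g = s F_1 + d and
  F_2' = F_1' / (s F_1 + d)^2 is the derivative of a Moebius transformation of F_1.
*)

theory Submission
  imports Defs
begin

section \<open>Wirtinger derivatives\<close>

(* a = df/dz and b = df/d(conj z) are the Wirtinger derivatives of f at z. *)
definition has_wirtinger_derivs :: "(complex \<Rightarrow> complex) \<Rightarrow> complex \<Rightarrow> complex \<Rightarrow> complex \<Rightarrow> bool" where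
  "has_wirtinger_derivs f a b z \<longleftrightarrow> (f has_derivative (\<lambda>h. a * h + b * cnj h)) (at z)"

lemma has_wirtinger_derivs_field:
  "(f has_field_derivative f') (at z) \<Longrightarrow> has_wirtinger_derivs f f' 0 z"
  unfolding has_wirtinger_derivs_def has_field_derivative_def by simp

lemma has_wirtinger_derivs_cnj:
  "(f has_field_derivative f') (at z) \<Longrightarrow> has_wirtinger_derivs (\<lambda>w. cnj (f w)) 0 (cnj f') z"
  unfolding has_wirtinger_derivs_def has_field_derivative_def
  by (rule has_derivative_eq_rhs, rule has_derivative_cnj, assumption) (auto simp: mult.commute)

lemma has_wirtinger_derivs_const: "has_wirtinger_derivs (\<lambda>w. c) 0 0 z"
  unfolding has_wirtinger_derivs_def by simp

lemma has_wirtinger_derivs_add: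
  "has_wirtinger_derivs f a b z \<Longrightarrow> has_wirtinger_derivs g c d z \<Longrightarrow>
    has_wirtinger_derivs (\<lambda>w. f w + g w) (a + c) (b + d) z"
  unfolding has_wirtinger_derivs_def
  by (rule has_derivative_eq_rhs, rule has_derivative_add, assumption+) (auto simp: algebra_simps)

lemma has_wirtinger_derivs_diff:
  "has_wirtinger_derivs f a b z \<Longrightarrow> has_wirtinger_derivs g c d z \<Longrightarrow>
    has_wirtinger_derivs (\<lambda>w. f w - g w) (a - c) (b - d) z"
  unfolding has_wirtinger_derivs_def
  by (rule has_derivative_eq_rhs, rule has_derivative_diff) (auto simp: algebra_simps)

lemma has_wirtinger_derivs_mult:
  "has_wirtinger_derivs f a b z \<Longrightarrow> has_wirtinger_derivs g c d z \<Longrightarrow>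
    has_wirtinger_derivs (\<lambda>w. f w * g w) (f z * c + a * g z) (f z * d + b * g z) z"
  unfolding has_wirtinger_derivs_def
  by (rule has_derivative_eq_rhs, rule has_derivative_mult) (auto simp: algebra_simps)

lemma has_wirtinger_derivs_compose:
  assumes "has_wirtinger_derivs f a b z" "(h has_field_derivative h') (at (f z))"
  shows "has_wirtinger_derivs (\<lambda>w. h (f w)) (h' * a) (h' * b) z"
  using has_derivative_compose[OF assms(1)[unfolded has_wirtinger_derivs_def]
      assms(2)[unfolded has_field_derivative_def]]
  unfolding has_wirtinger_derivs_def by (simp add: distrib_left mult.assoc)

lemma has_wirtinger_derivs_divide:
  assumes f: "has_wirtinger_derivs f a b z" and g: "has_wirtinger_derivs g c d z" and "g z \<noteq> 0"
  shows "has_wirtinger_derivs (\<lambda>w. f w / g w)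
    ((a * g z - f z * c) / (g z)^2) ((b * g z - f z * d) / (g z)^2) z"
proof -
  have "(inverse has_field_derivative - inverse ((g z)^2)) (at (g z))"
    using DERIV_inverse[OF \<open>g z \<noteq> 0\<close>, of UNIV] by (simp add: power2_eq_square)
  from has_wirtinger_derivs_mult[OF f has_wirtinger_derivs_compose[OF g this]]
  have "has_wirtinger_derivs (\<lambda>w. f w * inverse (g w))
    (f z * (- inverse ((g z)^2) * c) + a * inverse (g z))
    (f z * (- inverse ((g z)^2) * d) + b * inverse (g z)) z" .
  moreover have
    "f z * (- inverse ((g z)^2) * c) + a * inverse (g z) = (a * g z - f z * c) / (g z)^2"
    "f z * (- inverse ((g z)^2) * d) + b * inverse (g z) = (b * g z - f z * d) / (g z)^2"
    using \<open>g z \<noteq> 0\<close> by (simp_all add: field_simps power2_eq_square)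
  ultimately show ?thesis by (simp add: divide_inverse)
qed

lemma has_wirtinger_derivs_power2:
  "has_wirtinger_derivs f a b z \<Longrightarrow> has_wirtinger_derivs (\<lambda>w. (f w)^2) (2 * f z * a) (2 * f z * b) z"
  using has_wirtinger_derivs_mult[of f a b z f a b] by (simp add: power2_eq_square algebra_simps)

lemma has_wirtinger_derivs_transform_within_open:
  "has_wirtinger_derivs f a b z \<Longrightarrow> open S \<Longrightarrow> z \<in> S \<Longrightarrow> (\<And>w. w \<in> S \<Longrightarrow> f w = g w) \<Longrightarrow>
    has_wirtinger_derivs g a b z"
  unfolding has_wirtinger_derivs_def by (rule has_derivative_transform_within_open)

lemma has_wirtinger_derivs_unique:
  assumes "has_wirtinger_derivs f a b z" "has_wirtinger_derivs f c d z"
  shows "a = c" "b = d"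
proof -
  have "(\<lambda>h. a * h + b * cnj h) = (\<lambda>h. c * h + d * cnj h)"
    using assms unfolding has_wirtinger_derivs_def by (rule has_derivative_unique)
  from fun_cong[OF this, of 1] fun_cong[OF this, of \<i>]
  have "a + b = c + d" "\<i> * (a - b) = \<i> * (c - d)" by (simp_all add: algebra_simps)
  hence "a + b = c + d" "a - b = c - d" by simp_all
  hence "(a + b) + (a - b) = (c + d) + (c - d)" "(a + b) - (a - b) = (c + d) - (c - d)" by simp_all
  thus "a = c" "b = d" by (simp_all add: algebra_simps)
qed

lemma has_wirtinger_derivs_field_imp_zero:
  "has_wirtinger_derivs f a b z \<Longrightarrow> (f has_field_derivative f') (at z) \<Longrightarrow> b = 0"
  using has_wirtinger_derivs_unique has_wirtinger_derivs_field by blast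

lemma wirtinger_z_eq:
  assumes "has_wirtinger_derivs f a b z"
  shows "wirtinger_z f z = a"
proof -
  have "frechet_derivative f (at z) = (\<lambda>h. a * h + b * cnj h)"
    using assms unfolding has_wirtinger_derivs_def by (metis frechet_derivative_at)
  thus ?thesis unfolding wirtinger_z_def by (simp add: algebra_simps)
qed

lemma wirtinger_z_transform_within_open:
  assumes "open S" "z \<in> S" "\<And>w. w \<in> S \<Longrightarrow> f w = g w"
  shows "wirtinger_z f z = wirtinger_z g z"
proof -
  have "(f has_derivative D) (at z) \<longleftrightarrow> (g has_derivative D) (at z)" for D
    using assms by (metis has_derivative_transform_within_open)
  thus ?thesis unfolding wirtinger_z_def frechet_derivative_def by simp
qed

lemma deriv_transform_within_open:
  assumes "open S" "z \<in> S" "\<And>w. w \<in> S \<Longrightarrow> f w = g w"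
  shows "deriv f z = deriv g z"
proof -
  have "eventually (\<lambda>w. w \<in> S) (nhds z)"
    using assms by (simp add: eventually_nhds_in_open)
  thus ?thesis by (intro deriv_cong_ev) (auto simp: assms(3) elim!: eventually_mono)
qed

lemma deriv_eq_0_if_constant_on_open:
  assumes "open S" "z \<in> S" "\<And>w. w \<in> S \<Longrightarrow> f w = c"
  shows "deriv f z = 0"
  using deriv_transform_within_open[OF assms] by simp

lemma holomorphic_deriv_eq_0_imp_constant:
  assumes "open S" "connected S" "f holomorphic_on S" "\<And>z. z \<in> S \<Longrightarrow> deriv f z = 0"
  shows "\<exists>c. \<forall>z\<in>S. f z = c"
proof -
  have "\<forall>z\<in>S - {}. (f has_field_derivative 0) (at z)"
    using assms by (metis Diff_empty holomorphic_derivI)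
  with assms show ?thesis
    by (metis DERIV_zero_connected_constant finite.emptyI holomorphic_on_imp_continuous_on)
qed

lemma one_minus_mult_cnj_nonzero:
  assumes "norm (x::complex) < 1"
  shows "1 - x * cnj x \<noteq> 0"
proof -
  have "(norm x)^2 < 1" using assms by (simp add: power_less_one_iff)
  thus ?thesis by (metis complex_norm_square eq_iff_diff_eq_0 of_real_eq_1_iff less_irrefl)
qed

section \<open>The dilatation factor of the pre-Schwarzian\<close>

definition dilatation_factor :: "(complex \<Rightarrow> complex) \<Rightarrow> complex \<Rightarrow> complex" where
  "dilatation_factor p w = cnj (p w) / (1 - p w * cnj (p w))"

lemma has_wirtinger_derivs_dilatation_factor:
  assumes p: "(p has_field_derivative p') (at z)" and "norm (p z) < 1"
  shows "has_wirtinger_derivs (dilatation_factor p)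
    (p' * (dilatation_factor p z)^2) (cnj p' / (1 - p z * cnj (p z))^2) z"
proof -
  have nz: "1 - p z * cnj (p z) \<noteq> 0" using assms(2) by (rule one_minus_mult_cnj_nonzero)
  note num = has_wirtinger_derivs_cnj[OF p]
  note den = has_wirtinger_derivs_diff[OF has_wirtinger_derivs_const
      has_wirtinger_derivs_mult[OF has_wirtinger_derivs_field[OF p] num]]
  from has_wirtinger_derivs_divide[OF num den nz] show ?thesis
    unfolding dilatation_factor_def[abs_def] using nz by (simp add: field_simps power2_eq_square)
qed

lemma deriv_eq_0_if_dilatation_factor_holomorphic:
  assumes "open U" "p holomorphic_on U" "\<And>w. w \<in> U \<Longrightarrow> norm (p w) < 1"
    and "g holomorphic_on U" "\<And>w. w \<in> U \<Longrightarrow> dilatation_factor p w = g w" and z: "z \<in> U"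
  shows "deriv p z = 0"
proof -
  have dp: "(p has_field_derivative deriv p z) (at z)"
    using assms by (auto intro: holomorphic_derivI)
  have "(g has_field_derivative deriv g z) (at z)"
    using assms by (auto intro: holomorphic_derivI)
  hence "(dilatation_factor p has_field_derivative deriv g z) (at z)"
    using assms by (auto intro: has_field_derivative_transform_within_open)
  from has_wirtinger_derivs_field_imp_zero[OF
      has_wirtinger_derivs_dilatation_factor[OF dp assms(3)[OF z]] this]
  show ?thesis using one_minus_mult_cnj_nonzero[OF assms(3)[OF z]] by simp
qed

lemma constant_if_dilatation_factor_holomorphic_off_critical_points:
  assumes "open \<Omega>" "connected \<Omega>" "p holomorphic_on \<Omega>" "\<And>w. w \<in> \<Omega> \<Longrightarrow> norm (p w) < 1"
    and "g holomorphic_on {w \<in> \<Omega>. deriv p w \<noteq> 0}"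
    and "\<And>w. w \<in> \<Omega> \<Longrightarrow> deriv p w \<noteq> 0 \<Longrightarrow> dilatation_factor p w = g w"
  shows "\<exists>c. \<forall>z\<in>\<Omega>. p z = c"
proof (rule holomorphic_deriv_eq_0_imp_constant[OF assms(1-3)])
  let ?U = "{w \<in> \<Omega>. deriv p w \<noteq> 0}"
  have "continuous_on \<Omega> (deriv p)"
    using assms by (intro holomorphic_on_imp_continuous_on holomorphic_deriv)
  hence "open (\<Omega> \<inter> deriv p -` (- {0}))"
    using assms(1) by (intro continuous_open_preimage) auto
  moreover have "\<Omega> \<inter> deriv p -` (- {0}) = ?U" by auto
  ultimately have "open ?U" by simp
  fix z assume "z \<in> \<Omega>"
  show "deriv p z = 0"
  proof (cases "z \<in> ?U")
    case True
    with \<open>open ?U\<close> assms(3-6) show ?thesis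
      by (intro deriv_eq_0_if_dilatation_factor_holomorphic[of ?U p g])
         (auto intro: holomorphic_on_subset)
  next
    case False
    with \<open>z \<in> \<Omega>\<close> show ?thesis by simp
  qed
qed

section \<open>Pre-Schwarzian and Schwarzian of holomorphic functions\<close>

definition pre_schwarzian :: "(complex \<Rightarrow> complex) \<Rightarrow> complex \<Rightarrow> complex" where
  "pre_schwarzian F z = deriv (deriv F) z / deriv F z"

definition schwarzian :: "(complex \<Rightarrow> complex) \<Rightarrow> complex \<Rightarrow> complex" where
  "schwarzian F z = deriv (pre_schwarzian F) z - (pre_schwarzian F z)^2 / 2"

lemma holomorphic_on_pre_schwarzian:
  "F holomorphic_on S \<Longrightarrow> open S \<Longrightarrow> (\<And>z. z \<in> S \<Longrightarrow> deriv F z \<noteq> 0) \<Longrightarrow>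
    pre_schwarzian F holomorphic_on S"
  unfolding pre_schwarzian_def[abs_def] by (intro holomorphic_intros holomorphic_deriv) auto

lemma holomorphic_on_schwarzian:
  "F holomorphic_on S \<Longrightarrow> open S \<Longrightarrow> (\<And>z. z \<in> S \<Longrightarrow> deriv F z \<noteq> 0) \<Longrightarrow>
    schwarzian F holomorphic_on S"
  unfolding schwarzian_def[abs_def]
  by (intro holomorphic_intros holomorphic_deriv holomorphic_on_pre_schwarzian) auto

lemma proportional_if_wronskian_zero:
  assumes "open S" "connected S" "f holomorphic_on S" "g holomorphic_on S"
    and "\<And>z. z \<in> S \<Longrightarrow> f z \<noteq> 0" "\<And>z. z \<in> S \<Longrightarrow> f z * deriv g z = deriv f z * g z"
  shows "\<exists>c. \<forall>z\<in>S. g z = c * f z"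
proof -
  have "deriv (\<lambda>w. g w / f w) z = 0" if z: "z \<in> S" for z
  proof -
    have "((\<lambda>w. g w / f w) has_field_derivative
        (deriv g z * f z - g z * deriv f z) / (f z * f z)) (at z)"
      using assms z by (intro DERIV_divide holomorphic_derivI[of _ S]) auto
    thus ?thesis using assms(6)[OF z] by (simp add: DERIV_imp_deriv mult.commute)
  qed
  moreover have "(\<lambda>w. g w / f w) holomorphic_on S"
    using assms by (intro holomorphic_intros) auto
  ultimately obtain c where "\<forall>z\<in>S. g z / f z = c"
    using holomorphic_deriv_eq_0_imp_constant[OF assms(1,2)] by blast
  thus ?thesis using assms(5) by (metis nonzero_eq_divide_eq)
qed

lemma pre_schwarzian_eq_imp_deriv_proportional:
  assumes "open S" "connected S" "F1 holomorphic_on S" "F2 holomorphic_on S"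
    and "\<And>z. z \<in> S \<Longrightarrow> deriv F1 z \<noteq> 0" "\<And>z. z \<in> S \<Longrightarrow> deriv F2 z \<noteq> 0"
    and "\<And>z. z \<in> S \<Longrightarrow> pre_schwarzian F1 z = pre_schwarzian F2 z"
  shows "\<exists>\<alpha>. \<forall>z\<in>S. deriv F2 z = \<alpha> * deriv F1 z"
  using assms by (intro proportional_if_wronskian_zero holomorphic_deriv)
    (auto simp: pre_schwarzian_def field_simps)

lemma schwarzian_of_deriv_div_square:
  assumes S: "open S" "z \<in> S" and hol: "F holomorphic_on S" "g holomorphic_on S"
    and nz: "\<And>w. w \<in> S \<Longrightarrow> deriv F w \<noteq> 0" "\<And>w. w \<in> S \<Longrightarrow> g w \<noteq> 0"
    and H: "\<And>w. w \<in> S \<Longrightarrow> deriv H w = deriv F w / (g w)^2"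
  shows "schwarzian H z = schwarzian F z
    - 2 * (deriv F z * deriv (deriv g) z - deriv (deriv F) z * deriv g z) / (deriv F z * g z)"
proof -
  have dF: "(deriv F has_field_derivative deriv (deriv F) w) (at w)"
    and dg: "(g has_field_derivative deriv g w) (at w)"
    and dg': "(deriv g has_field_derivative deriv (deriv g) w) (at w)"
    and dpre: "(pre_schwarzian F has_field_derivative deriv (pre_schwarzian F) w) (at w)"
    if "w \<in> S" for w
    using that S hol nz
    by (auto intro!: holomorphic_derivI holomorphic_deriv holomorphic_on_pre_schwarzian)
  have pre: "pre_schwarzian H w = pre_schwarzian F w - 2 * (deriv g w / g w)" if w: "w \<in> S" for w
  proof -
    have "deriv (deriv H) w = deriv (\<lambda>v. deriv F v / (g v)^2) w"
      using S(1) w H by (rule deriv_transform_within_open)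
    also have "\<dots> = (deriv (deriv F) w * (g w)^2 - deriv F w * (2 * g w * deriv g w))
        / ((g w)^2 * (g w)^2)"
      using nz(2)[OF w] by (intro DERIV_imp_deriv DERIV_divide dF[OF w])
        (auto intro!: derivative_eq_intros dg[OF w])
    finally have H'': "deriv (deriv H) w = \<dots>" .
    show ?thesis
      unfolding pre_schwarzian_def H[OF w] H'' using nz[OF w]
      by (simp add: field_simps power2_eq_square)
  qed
  have "deriv (pre_schwarzian H) z = deriv (\<lambda>w. pre_schwarzian F w - 2 * (deriv g w / g w)) z"
    using S pre by (rule deriv_transform_within_open)
  also have "\<dots> = deriv (pre_schwarzian F) z
      - 2 * ((deriv (deriv g) z * g z - deriv g z * deriv g z) / (g z * g z))"
    using nz(2)[OF S(2)]
    by (intro DERIV_imp_deriv DERIV_diff dpre[OF S(2)] DERIV_cmult DERIV_divide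
        dg[OF S(2)] dg'[OF S(2)])
  finally have DH: "deriv (pre_schwarzian H) z = \<dots>" .
  show ?thesis
    unfolding schwarzian_def DH pre[OF S(2)] unfolding pre_schwarzian_def
    using nz[OF S(2)] by (simp add: field_simps power2_eq_square)
qed

lemma affine_if_wronskian_of_derivs_zero:
  assumes S: "open S" "connected S" and hol: "F holomorphic_on S" "g holomorphic_on S"
    and "\<And>z. z \<in> S \<Longrightarrow> deriv F z \<noteq> 0"
    and "\<And>z. z \<in> S \<Longrightarrow> deriv F z * deriv (deriv g) z = deriv (deriv F) z * deriv g z"
  shows "\<exists>s d. \<forall>z\<in>S. g z = s * F z + d"
proof -
  obtain s where s: "\<forall>z\<in>S. deriv g z = s * deriv F z"
    using assms by (metis proportional_if_wronskian_zero holomorphic_deriv)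
  have "deriv (\<lambda>w. g w - s * F w) z = 0" if "z \<in> S" for z
    using S that hol s
    by (auto intro!: DERIV_imp_deriv derivative_eq_intros holomorphic_derivI[of _ S])
  moreover have "(\<lambda>w. g w - s * F w) holomorphic_on S"
    using hol by (intro holomorphic_intros)
  ultimately obtain d where "\<forall>z\<in>S. g z - s * F z = d"
    using holomorphic_deriv_eq_0_imp_constant[OF S] by blast
  thus ?thesis by (metis diff_eq_eq add.commute)
qed

lemma deriv_moebius_comp:
  assumes "(F has_field_derivative F') (at z)" "s * F z + d \<noteq> 0"
  shows "deriv (moebius m n s d \<circ> F) z = (m * d - n * s) * F' / (s * F z + d)^2"
proof -
  have "(moebius m n s d has_field_derivative
      (m * (s * F z + d) - (m * F z + n) * s) / ((s * F z + d) * (s * F z + d))) (at (F z))"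
    unfolding moebius_def[abs_def] using assms(2) by (auto intro!: derivative_eq_intros)
  from DERIV_imp_deriv[OF DERIV_chain[OF this assms(1)]] show ?thesis
    by (simp add: algebra_simps power2_eq_square)
qed

lemma schwarzian_eq_imp_moebius_comp:
  assumes \<Omega>: "open \<Omega>" "simply_connected \<Omega>" "\<Omega> \<noteq> {}"
    and hol: "F1 holomorphic_on \<Omega>" "F2 holomorphic_on \<Omega>"
    and nz: "\<And>z. z \<in> \<Omega> \<Longrightarrow> deriv F1 z \<noteq> 0" "\<And>z. z \<in> \<Omega> \<Longrightarrow> deriv F2 z \<noteq> 0"
    and S: "\<And>z. z \<in> \<Omega> \<Longrightarrow> schwarzian F1 z = schwarzian F2 z"
  shows "\<exists>m n s d. m * d - n * s \<noteq> 0 \<and> (\<forall>z\<in>\<Omega>. s * F1 z + d \<noteq> 0) \<and>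
    (\<forall>z\<in>\<Omega>. deriv F2 z = deriv (moebius m n s d \<circ> F1) z)"
proof -
  have conn: "connected \<Omega>" using \<Omega>(2) by (rule simply_connected_imp_connected)
  have "(\<lambda>w. deriv F1 w / deriv F2 w) holomorphic_on \<Omega>"
    using \<Omega> hol nz by (intro holomorphic_intros holomorphic_deriv) auto
  then obtain g where g: "g holomorphic_on \<Omega>"
    and g2: "\<And>z. z \<in> \<Omega> \<Longrightarrow> deriv F1 z / deriv F2 z = (g z)^2"
    using \<Omega>(2) nz unfolding simply_connected_eq_holomorphic_sqrt[OF \<Omega>(1)] by force
  have g_nz: "g z \<noteq> 0" if "z \<in> \<Omega>" for z
    using g2[OF that] nz[OF that] by force
  have F2': "deriv F2 z = deriv F1 z / (g z)^2" if "z \<in> \<Omega>" for z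
    using g2[OF that] nz[OF that] by (simp add: field_simps)
  have "deriv F1 z * deriv (deriv g) z = deriv (deriv F1) z * deriv g z" if z: "z \<in> \<Omega>" for z
    using schwarzian_of_deriv_div_square[OF \<Omega>(1) z hol(1) g nz(1) g_nz F2'] S[OF z]
      nz(1)[OF z] g_nz[OF z]
    by (simp add: field_simps)
  then obtain s d where g_eq: "\<And>z. z \<in> \<Omega> \<Longrightarrow> g z = s * F1 z + d"
    using affine_if_wronskian_of_derivs_zero[OF \<Omega>(1) conn hol(1) g nz(1)] by blast
  obtain m n where mn: "m * d - n * s = 1"
  proof (cases "d = 0")
    case True
    obtain z0 where "z0 \<in> \<Omega>" using \<Omega>(3) by blast
    with g_nz g_eq True have "s \<noteq> 0" by force
    with True that[of 0 "-1/s"] show ?thesis by simp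
  next
    case False
    with that[of "1/d" 0] show ?thesis by simp
  qed
  have den_nz: "s * F1 z + d \<noteq> 0" if "z \<in> \<Omega>" for z
    using g_nz g_eq that by force
  have "deriv F2 z = deriv (moebius m n s d \<circ> F1) z" if z: "z \<in> \<Omega>" for z
  proof -
    have "(F1 has_field_derivative deriv F1 z) (at z)"
      using \<Omega>(1) hol(1) z by (auto intro: holomorphic_derivI)
    from deriv_moebius_comp[OF this den_nz[OF z]] show ?thesis
      using F2'[OF z] g_eq[OF z] mn by simp
  qed
  with den_nz show ?thesis using mn by (intro exI[of _ m] exI[of _ n] exI[of _ s] exI[of _ d]) auto
qed

section \<open>Sense-preserving harmonic mappings\<close>

locale sense_preserving_harmonic_map =
  fixes \<Omega> :: "complex set" and F G :: "complex \<Rightarrow> complex"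
  assumes open_domain: "open \<Omega>" and sense_preserving: "sense_preserving_harmonic \<Omega> F G"
begin

abbreviation p where "p \<equiv> dilatation F G"

lemma holomorphic_F: "F holomorphic_on \<Omega>"
  and holomorphic_G: "G holomorphic_on \<Omega>"
  and jacobian_pos: "z \<in> \<Omega> \<Longrightarrow> jacobian_H F G z > 0"
  using sense_preserving unfolding sense_preserving_harmonic_def by auto

lemma holomorphic_on_deriv:
  assumes "f holomorphic_on \<Omega>"
  shows "deriv f holomorphic_on \<Omega>"
  using assms open_domain by (rule holomorphic_deriv)

lemma has_field_derivative_deriv:
  assumes "f holomorphic_on \<Omega>" "z \<in> \<Omega>"
  shows "(f has_field_derivative deriv f z) (at z)"
  using assms(1) open_domain assms(2) by (rule holomorphic_derivI)

lemma deriv_F_nonzero: "z \<in> \<Omega> \<Longrightarrow> deriv F z \<noteq> 0"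
  using jacobian_pos[of z] by (auto simp: jacobian_H_def)

lemma deriv_G_eq: "z \<in> \<Omega> \<Longrightarrow> deriv G z = p z * deriv F z"
  using deriv_F_nonzero by (simp add: dilatation_def)

lemma holomorphic_dilatation: "p holomorphic_on \<Omega>"
proof -
  have "(\<lambda>w. deriv G w / deriv F w) holomorphic_on \<Omega>"
    using deriv_F_nonzero
    by (intro holomorphic_intros holomorphic_on_deriv holomorphic_F holomorphic_G)
  thus ?thesis by (simp add: dilatation_def[abs_def])
qed

lemma norm_dilatation_lt_1:
  assumes "z \<in> \<Omega>"
  shows "norm (p z) < 1"
proof -
  have "(norm (deriv G z))^2 < (norm (deriv F z))^2"
    using jacobian_pos[OF assms] by (simp add: jacobian_H_def)
  hence "norm (deriv G z) < norm (deriv F z)"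
    using power2_less_imp_less by fastforce
  thus ?thesis
    using deriv_F_nonzero[OF assms] by (simp add: dilatation_def norm_divide divide_less_eq)
qed

lemma jacobian_H_eq:
  "z \<in> \<Omega> \<Longrightarrow> complex_of_real (jacobian_H F G z) = deriv F z * cnj (deriv F z) * (1 - p z * cnj (p z))"
  by (simp add: jacobian_H_def deriv_G_eq norm_mult power_mult_distrib algebra_simps
      flip: complex_norm_square)

lemma pre_schwarzian_H_eq:
  assumes z: "z \<in> \<Omega>"
  shows "pre_schwarzian_H F G z = pre_schwarzian F z - deriv p z * dilatation_factor p z"
proof -
  have dF: "(deriv F has_field_derivative deriv (deriv F) z) (at z)"
    using z by (intro has_field_derivative_deriv holomorphic_on_deriv holomorphic_F)
  have dp: "(p has_field_derivative deriv p z) (at z)"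
    using z by (intro has_field_derivative_deriv holomorphic_dilatation)
  note dJ = has_wirtinger_derivs_mult[OF
      has_wirtinger_derivs_mult[OF
        has_wirtinger_derivs_field[OF dF] has_wirtinger_derivs_cnj[OF dF]]
      has_wirtinger_derivs_diff[OF has_wirtinger_derivs_const
        has_wirtinger_derivs_mult[OF
          has_wirtinger_derivs_field[OF dp] has_wirtinger_derivs_cnj[OF dp]]]]
  have "(Ln has_field_derivative inverse (complex_of_real (jacobian_H F G z)))
      (at (complex_of_real (jacobian_H F G z)))"
    using jacobian_pos[OF z]
    by (intro has_field_derivative_Ln) (auto simp: complex_nonpos_Reals_iff)
  note dLnJ = has_wirtinger_derivs_compose[OF dJ this[unfolded jacobian_H_eq[OF z]]]
  have "pre_schwarzian_H F G z
      = wirtinger_z (\<lambda>w. Ln (deriv F w * cnj (deriv F w) * (1 - p w * cnj (p w)))) z"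
    unfolding pre_schwarzian_H_def using open_domain z
    by (rule wirtinger_z_transform_within_open)
      (simp add: Ln_of_real jacobian_pos flip: jacobian_H_eq)
  also have "\<dots> = pre_schwarzian F z - deriv p z * dilatation_factor p z"
    unfolding wirtinger_z_eq[OF dLnJ] pre_schwarzian_def dilatation_factor_def
    using deriv_F_nonzero[OF z] one_minus_mult_cnj_nonzero[OF norm_dilatation_lt_1[OF z]]
    by (simp add: field_simps)
  finally show ?thesis .
qed

lemma schwarzian_H_eq:
  assumes z: "z \<in> \<Omega>"
  shows "schwarzian_H F G z = schwarzian F z
    + dilatation_factor p z * (deriv p z * pre_schwarzian F z - deriv (deriv p) z)
    - 3/2 * (deriv p z * dilatation_factor p z)^2"
proof -
  have dpre: "(pre_schwarzian F has_field_derivative deriv (pre_schwarzian F) z) (at z)"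
    using z deriv_F_nonzero open_domain
    by (intro has_field_derivative_deriv holomorphic_on_pre_schwarzian holomorphic_F)
  have dp: "(p has_field_derivative deriv p z) (at z)"
    using z by (intro has_field_derivative_deriv holomorphic_dilatation)
  have dp': "(deriv p has_field_derivative deriv (deriv p) z) (at z)"
    using z by (intro has_field_derivative_deriv holomorphic_on_deriv holomorphic_dilatation)
  note dP = has_wirtinger_derivs_diff[OF has_wirtinger_derivs_field[OF dpre]
      has_wirtinger_derivs_mult[OF has_wirtinger_derivs_field[OF dp']
        has_wirtinger_derivs_dilatation_factor[OF dp norm_dilatation_lt_1[OF z]]]]
  have W: "wirtinger_z (pre_schwarzian_H F G) z
      = wirtinger_z (\<lambda>w. pre_schwarzian F w - deriv p w * dilatation_factor p w) z"
    using open_domain z by (rule wirtinger_z_transform_within_open) (simp add: pre_schwarzian_H_eq)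
  show ?thesis
    unfolding schwarzian_H_def schwarzian_def pre_schwarzian_H_eq[OF z] W wirtinger_z_eq[OF dP]
    by (simp add: field_simps power2_eq_square)
qed

lemma deriv_dilatation_eq_0_if_constant:
  assumes "\<And>w. w \<in> \<Omega> \<Longrightarrow> p w = c" "z \<in> \<Omega>"
  shows "deriv p z = 0" "deriv (deriv p) z = 0"
proof -
  have "deriv p w = 0" if "w \<in> \<Omega>" for w
    using open_domain that assms(1) by (rule deriv_eq_0_if_constant_on_open)
  with open_domain assms(2) show "deriv p z = 0" "deriv (deriv p) z = 0"
    by (auto intro: deriv_eq_0_if_constant_on_open)
qed

lemma pre_schwarzian_H_eq_if_dilatation_constant:
  "(\<And>w. w \<in> \<Omega> \<Longrightarrow> p w = c) \<Longrightarrow> z \<in> \<Omega> \<Longrightarrow> pre_schwarzian_H F G z = pre_schwarzian F z"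
  by (simp add: pre_schwarzian_H_eq deriv_dilatation_eq_0_if_constant)

lemma schwarzian_H_eq_if_dilatation_constant:
  "(\<And>w. w \<in> \<Omega> \<Longrightarrow> p w = c) \<Longrightarrow> z \<in> \<Omega> \<Longrightarrow> schwarzian_H F G z = schwarzian F z"
  by (simp add: schwarzian_H_eq deriv_dilatation_eq_0_if_constant)

lemma dilatation_constant_if_holomorphic_pre_schwarzian_H:
  assumes "connected \<Omega>" "pre_schwarzian_H F G holomorphic_on \<Omega>"
  shows "\<exists>c. \<forall>z\<in>\<Omega>. p z = c"
proof (rule constant_if_dilatation_factor_holomorphic_off_critical_points[OF open_domain assms(1)
      holomorphic_dilatation norm_dilatation_lt_1])
  have "pre_schwarzian F holomorphic_on \<Omega>"
    using holomorphic_F open_domain deriv_F_nonzero by (rule holomorphic_on_pre_schwarzian)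
  with assms(2) holomorphic_on_deriv[OF holomorphic_dilatation]
  show "(\<lambda>w. (pre_schwarzian F w - pre_schwarzian_H F G w) / deriv p w)
      holomorphic_on {w \<in> \<Omega>. deriv p w \<noteq> 0}"
    by (intro holomorphic_on_divide holomorphic_on_diff) (auto intro: holomorphic_on_subset)
  show "dilatation_factor p w = (pre_schwarzian F w - pre_schwarzian_H F G w) / deriv p w"
    if "w \<in> \<Omega>" "deriv p w \<noteq> 0" for w
    using that by (simp add: pre_schwarzian_H_eq field_simps)
qed

lemma dilatation_factor_eq_if_holomorphic_schwarzian_H:
  assumes hol: "schwarzian_H F G holomorphic_on \<Omega>" and w: "w \<in> \<Omega>" and "deriv p w \<noteq> 0"
  shows "dilatation_factor p w
    = (deriv p w * pre_schwarzian F w - deriv (deriv p) w) / (3 * (deriv p w)^2)"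
proof -
  define A1 where "A1 v = deriv p v * pre_schwarzian F v - deriv (deriv p) v" for v
  define A2 where "A2 v = -3/2 * (deriv p v)^2" for v
  let ?u = "dilatation_factor p"
  have hol_A: "schwarzian F holomorphic_on \<Omega>" "A1 holomorphic_on \<Omega>" "A2 holomorphic_on \<Omega>"
    unfolding A1_def[abs_def] A2_def[abs_def]
    using holomorphic_on_schwarzian[OF holomorphic_F open_domain deriv_F_nonzero]
      holomorphic_on_pre_schwarzian[OF holomorphic_F open_domain deriv_F_nonzero]
      holomorphic_on_deriv[OF holomorphic_dilatation]
      holomorphic_on_deriv[OF holomorphic_on_deriv[OF holomorphic_dilatation]]
    by (auto intro!: holomorphic_intros)
  have S_eq: "schwarzian_H F G v = schwarzian F v + ?u v * A1 v + (?u v)^2 * A2 v" if "v \<in> \<Omega>" for v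
    unfolding schwarzian_H_eq[OF that] A1_def A2_def by (simp add: algebra_simps power2_eq_square)
  have dp: "(p has_field_derivative deriv p w) (at w)"
    using w by (intro has_field_derivative_deriv holomorphic_dilatation)
  define \<beta> where "\<beta> = cnj (deriv p w) / (1 - p w * cnj (p w))^2"
  have "\<beta> \<noteq> 0"
    unfolding \<beta>_def using \<open>deriv p w \<noteq> 0\<close> one_minus_mult_cnj_nonzero[OF norm_dilatation_lt_1[OF w]]
    by simp
  note du = has_wirtinger_derivs_dilatation_factor[OF dp norm_dilatation_lt_1[OF w], folded \<beta>_def]
  note dA = has_field_derivative_deriv[OF hol_A(1) w] has_field_derivative_deriv[OF hol_A(2) w]
    has_field_derivative_deriv[OF hol_A(3) w]
  note dS = has_wirtinger_derivs_add[OF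
      has_wirtinger_derivs_add[OF has_wirtinger_derivs_field[OF dA(1)]
        has_wirtinger_derivs_mult[OF du has_wirtinger_derivs_field[OF dA(2)]]]
      has_wirtinger_derivs_mult[OF
        has_wirtinger_derivs_power2[OF du] has_wirtinger_derivs_field[OF dA(3)]]]
  (* the d/d(conj z)-derivative of the holomorphic function schwarzian_H F G vanishes *)
  have "\<beta> * (A1 w + 2 * ?u w * A2 w) = 0"
    using has_wirtinger_derivs_field_imp_zero[OF
        has_wirtinger_derivs_transform_within_open[OF dS open_domain w S_eq[symmetric]]
        has_field_derivative_deriv[OF hol w]]
    by (simp add: algebra_simps)
  with \<open>\<beta> \<noteq> 0\<close> have "A1 w + 2 * ?u w * A2 w = 0" by simp
  with \<open>deriv p w \<noteq> 0\<close> show ?thesis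
    unfolding A1_def A2_def by (simp add: field_simps)
qed

lemma schwarzian_H_holomorphic_iff_dilatation_constant:
  assumes "connected \<Omega>"
  shows "schwarzian_H F G holomorphic_on \<Omega> \<longleftrightarrow> (\<exists>c. \<forall>z\<in>\<Omega>. p z = c)"
proof
  assume "\<exists>c. \<forall>z\<in>\<Omega>. p z = c"
  then obtain c where "\<And>z. z \<in> \<Omega> \<Longrightarrow> p z = c" by blast
  hence "\<And>z. z \<in> \<Omega> \<Longrightarrow> schwarzian F z = schwarzian_H F G z"
    by (simp add: schwarzian_H_eq_if_dilatation_constant)
  with holomorphic_on_schwarzian[OF holomorphic_F open_domain deriv_F_nonzero]
  show "schwarzian_H F G holomorphic_on \<Omega>" by (rule holomorphic_transform)
next
  assume hol: "schwarzian_H F G holomorphic_on \<Omega>"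
  show "\<exists>c. \<forall>z\<in>\<Omega>. p z = c"
  proof (rule constant_if_dilatation_factor_holomorphic_off_critical_points[OF open_domain assms
        holomorphic_dilatation norm_dilatation_lt_1])
    let ?U = "{w \<in> \<Omega>. deriv p w \<noteq> 0}"
    have "pre_schwarzian F holomorphic_on ?U" "deriv p holomorphic_on ?U"
      "deriv (deriv p) holomorphic_on ?U"
      using holomorphic_on_pre_schwarzian[OF holomorphic_F open_domain deriv_F_nonzero]
        holomorphic_on_deriv[OF holomorphic_dilatation]
        holomorphic_on_deriv[OF holomorphic_on_deriv[OF holomorphic_dilatation]]
      by (auto intro: holomorphic_on_subset)
    thus "(\<lambda>w. (deriv p w * pre_schwarzian F w - deriv (deriv p) w) / (3 * (deriv p w)^2))
        holomorphic_on ?U"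
      by (intro holomorphic_on_divide holomorphic_on_diff holomorphic_on_mult holomorphic_on_const
          holomorphic_on_power) auto
    show "dilatation_factor p w
        = (deriv p w * pre_schwarzian F w - deriv (deriv p) w) / (3 * (deriv p w)^2)"
      if "w \<in> \<Omega>" "deriv p w \<noteq> 0" for w
      using hol that by (rule dilatation_factor_eq_if_holomorphic_schwarzian_H)
  qed
qed

end

lemma jacobian_H_of_proportional_derivs:
  "deriv F z = \<alpha> * f \<Longrightarrow> deriv G z = \<beta> * f \<Longrightarrow>
    jacobian_H F G z = (norm f)^2 * ((norm \<alpha>)^2 - (norm \<beta>)^2)"
  by (simp add: jacobian_H_def norm_mult power_mult_distrib algebra_simps)

lemma jacobian_H_eq_imp_derivs_proportional:
  assumes K1: "sense_preserving_harmonic_map \<Omega> F1 G1"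
    and K2: "sense_preserving_harmonic_map \<Omega> F2 G2"
    and \<Omega>: "connected \<Omega>" "\<Omega> \<noteq> {}"
    and lam: "\<forall>z\<in>\<Omega>. deriv G1 z = lam * deriv F1 z"
    and J: "\<forall>z\<in>\<Omega>. jacobian_H F1 G1 z = jacobian_H F2 G2 z"
  shows "\<exists>\<alpha> \<beta>. (\<forall>z\<in>\<Omega>. deriv F2 z = \<alpha> * deriv F1 z \<and> deriv G2 z = \<beta> * deriv F1 z) \<and>
    (norm \<alpha>)^2 - (norm \<beta>)^2 = 1 - (norm lam)^2 \<and> 1 - (norm lam)^2 > 0"
proof -
  interpret K1: sense_preserving_harmonic_map \<Omega> F1 G1 by (rule K1)
  interpret K2: sense_preserving_harmonic_map \<Omega> F2 G2 by (rule K2)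
  have p1: "dilatation F1 G1 z = lam" if "z \<in> \<Omega>" for z
    using lam K1.deriv_F_nonzero that by (simp add: dilatation_def)
  have P: "pre_schwarzian_H F2 G2 z = pre_schwarzian F1 z" if z: "z \<in> \<Omega>" for z
  proof -
    have "pre_schwarzian_H F2 G2 z = pre_schwarzian_H F1 G1 z"
      unfolding pre_schwarzian_H_def using K1.open_domain z
      by (rule wirtinger_z_transform_within_open) (simp add: J)
    thus ?thesis using K1.pre_schwarzian_H_eq_if_dilatation_constant[OF p1 z] by simp
  qed
  have "pre_schwarzian F1 holomorphic_on \<Omega>"
    using K1.holomorphic_F K1.open_domain K1.deriv_F_nonzero by (rule holomorphic_on_pre_schwarzian)
  hence "pre_schwarzian_H F2 G2 holomorphic_on \<Omega>"
    by (rule holomorphic_transform) (simp add: P)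
  then obtain \<beta>0 where p2: "\<forall>z\<in>\<Omega>. K2.p z = \<beta>0"
    using K2.dilatation_constant_if_holomorphic_pre_schwarzian_H[OF \<Omega>(1)] by blast
  have "pre_schwarzian F1 z = pre_schwarzian F2 z" if "z \<in> \<Omega>" for z
    using P[OF that] K2.pre_schwarzian_H_eq_if_dilatation_constant[of \<beta>0 z] p2 that by simp
  then obtain \<alpha> where F2': "\<forall>z\<in>\<Omega>. deriv F2 z = \<alpha> * deriv F1 z"
    using pre_schwarzian_eq_imp_deriv_proportional[OF K1.open_domain \<Omega>(1) K1.holomorphic_F
        K2.holomorphic_F K1.deriv_F_nonzero K2.deriv_F_nonzero] by blast
  have G2': "\<forall>z\<in>\<Omega>. deriv G2 z = (\<beta>0 * \<alpha>) * deriv F1 z"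
    using K2.deriv_G_eq p2 F2' by simp
  obtain z0 where z0: "z0 \<in> \<Omega>" using \<Omega>(2) by blast
  have "jacobian_H F1 G1 z0 = (norm (deriv F1 z0))^2 * (1 - (norm lam)^2)"
    using jacobian_H_of_proportional_derivs[of F1 z0 1 "deriv F1 z0" G1 lam] lam z0 by simp
  moreover have "jacobian_H F2 G2 z0 = (norm (deriv F1 z0))^2 * ((norm \<alpha>)^2 - (norm (\<beta>0 * \<alpha>))^2)"
    using F2' G2' z0 by (intro jacobian_H_of_proportional_derivs) auto
  moreover have "(norm (deriv F1 z0))^2 > 0" using K1.deriv_F_nonzero[OF z0] by simp
  ultimately have "(norm \<alpha>)^2 - (norm (\<beta>0 * \<alpha>))^2 = 1 - (norm lam)^2" "1 - (norm lam)^2 > 0"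
    using J K1.jacobian_pos[OF z0] z0 by (auto simp: zero_less_mult_iff)
  with F2' G2' show ?thesis by blast
qed

lemma schwarzian_H_eq_imp_moebius_comp:
  assumes K1: "sense_preserving_harmonic_map \<Omega> F1 G1"
    and K2: "sense_preserving_harmonic_map \<Omega> F2 G2"
    and \<Omega>: "simply_connected \<Omega>" "\<Omega> \<noteq> {}"
    and lam: "\<forall>z\<in>\<Omega>. deriv G1 z = lam * deriv F1 z"
    and S: "\<forall>z\<in>\<Omega>. schwarzian_H F1 G1 z = schwarzian_H F2 G2 z"
  shows "\<exists>c m n s d. norm c < 1 \<and> m * d - n * s \<noteq> 0 \<and> (\<forall>z\<in>\<Omega>. s * F1 z + d \<noteq> 0) \<and>
    (\<forall>z\<in>\<Omega>. deriv F2 z = deriv (moebius m n s d \<circ> F1) z \<and>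
             deriv G2 z = c * deriv (moebius m n s d \<circ> F1) z)"
proof -
  interpret K1: sense_preserving_harmonic_map \<Omega> F1 G1 by (rule K1)
  interpret K2: sense_preserving_harmonic_map \<Omega> F2 G2 by (rule K2)
  have conn: "connected \<Omega>" using \<Omega>(1) by (rule simply_connected_imp_connected)
  have p1: "dilatation F1 G1 z = lam" if "z \<in> \<Omega>" for z
    using lam K1.deriv_F_nonzero that by (simp add: dilatation_def)
  have "schwarzian_H F1 G1 holomorphic_on \<Omega>"
    using K1.schwarzian_H_holomorphic_iff_dilatation_constant[OF conn] p1 by blast
  hence "schwarzian_H F2 G2 holomorphic_on \<Omega>"
    by (rule holomorphic_transform) (use S in auto)
  then obtain c where p2: "\<forall>z\<in>\<Omega>. K2.p z = c"
    using K2.schwarzian_H_holomorphic_iff_dilatation_constant[OF conn] by blast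
  obtain z0 where z0: "z0 \<in> \<Omega>" using \<Omega>(2) by blast
  have "norm c < 1" using K2.norm_dilatation_lt_1[OF z0] p2 z0 by simp
  have "schwarzian F1 z = schwarzian F2 z" if "z \<in> \<Omega>" for z
    using K1.schwarzian_H_eq_if_dilatation_constant[OF p1 that]
      K2.schwarzian_H_eq_if_dilatation_constant[of c z] p2 S that by simp
  then obtain m n s d where mnsd: "m * d - n * s \<noteq> 0" "\<forall>z\<in>\<Omega>. s * F1 z + d \<noteq> 0"
      "\<forall>z\<in>\<Omega>. deriv F2 z = deriv (moebius m n s d \<circ> F1) z"
    using schwarzian_eq_imp_moebius_comp[OF K1.open_domain \<Omega>(1,2) K1.holomorphic_F K2.holomorphic_F
        K1.deriv_F_nonzero K2.deriv_F_nonzero] by blast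
  moreover have "\<forall>z\<in>\<Omega>. deriv G2 z = c * deriv (moebius m n s d \<circ> F1) z"
    using K2.deriv_G_eq p2 mnsd(3) by simp
  ultimately show ?thesis using \<open>norm c < 1\<close> by blast
qed

theorem mainTheorem2:
  fixes \<Omega> :: "complex set" and F1 G1 F2 G2 :: "complex \<Rightarrow> complex"
  assumes dom: "open \<Omega>" "connected \<Omega>" "simply_connected \<Omega>" "\<Omega> \<noteq> {}"
    and K1: "sense_preserving_harmonic \<Omega> F1 G1"
    and K2: "sense_preserving_harmonic \<Omega> F2 G2"
  shows
    "(schwarzian_H F1 G1 holomorphic_on \<Omega> \<longleftrightarrow>
        (\<exists>c. \<forall>z\<in>\<Omega>. dilatation F1 G1 z = c))
     \<and>
     (\<forall>lam. (\<forall>z\<in>\<Omega>. deriv G1 z = lam * deriv F1 z) \<longrightarrow>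
        (\<forall>z\<in>\<Omega>. jacobian_H F1 G1 z = jacobian_H F2 G2 z) \<longrightarrow>
        (\<exists>\<alpha> \<beta>. (\<forall>z\<in>\<Omega>. deriv F2 z = \<alpha> * deriv F1 z \<and> deriv G2 z = \<beta> * deriv F1 z) \<and>
               (norm \<alpha>)^2 - (norm \<beta>)^2 = 1 - (norm lam)^2 \<and> 1 - (norm lam)^2 > 0))
     \<and>
     (\<forall>lam. (\<forall>z\<in>\<Omega>. deriv G1 z = lam * deriv F1 z) \<longrightarrow>
        (\<forall>z\<in>\<Omega>. schwarzian_H F1 G1 z = schwarzian_H F2 G2 z) \<longrightarrow>
        (\<exists>c m n s d. norm c < 1 \<and> m * d - n * s \<noteq> 0 \<and>
           (\<forall>z\<in>\<Omega>. s * F1 z + d \<noteq> 0) \<and>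
           (\<forall>z\<in>\<Omega>. deriv F2 z = deriv (moebius m n s d \<circ> F1) z \<and>
                    deriv G2 z = c * deriv (moebius m n s d \<circ> F1) z)))"
proof -
  have K1': "sense_preserving_harmonic_map \<Omega> F1 G1"
    using dom(1) K1 by unfold_locales
  have K2': "sense_preserving_harmonic_map \<Omega> F2 G2"
    using dom(1) K2 by unfold_locales
  interpret K1: sense_preserving_harmonic_map \<Omega> F1 G1 by (rule K1')
  show ?thesis
    using K1.schwarzian_H_holomorphic_iff_dilatation_constant[OF dom(2)]
      jacobian_H_eq_imp_derivs_proportional[OF K1' K2' dom(2,4)]
      schwarzian_H_eq_imp_moebius_comp[OF K1' K2' dom(3,4)]
    by blast
qed

end
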